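(* Let $G$ be an abelian group (written multiplicatively) and let $C$ be a finite Sidon subset of $G$. If $A,B$ are (nonempty) subsets of $G$ with $AB\subset C$, then $|AB|\geq |A|+|B|-1$.
   Context: $AB=\{ab: a\in A, b\in B\}$. A subset $C\subset G$ is a Sidon subset if the equation $ab=cd$ with $a,b,c,d\in C$ has only the trivial solutions $\{a,b\}=\{c,d\}$. *)

theory Defs
  imports "HOL-Algebra.Group"
begin

definition set_mult :: "('a, 'b) monoid_scheme \<Rightarrow> 'a set \<Rightarrow> 'a set \<Rightarrow> 'a set" where
  "set_mult G A B = {a \<otimes>\<^bsub>G\<^esub> b | a b. a \<in> A \<and> b \<in> B}"

definition sidon :: "('a, 'b) monoid_scheme \<Rightarrow> 'a set \<Rightarrow> bool" where
  "sidon G C \<longleftrightarrow> C \<subseteq> carrier G \<and>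
     (\<forall>a\<in>C. \<forall>b\<in>C. \<forall>c\<in>C. \<forall>d\<in>C.
        a \<otimes>\<^bsub>G\<^esub> b = c \<otimes>\<^bsub>G\<^esub> d \<longrightarrow> {a, b} = {c, d})"

end

theory Submission
  imports Defs
begin

(* If A and B both contained two distinct elements a, a' and b, b', then
   (ab)(a'b') = (ab')(a'b) would be a nontrivial coincidence of products in the
   Sidon set C.  Hence A or B is a singleton, and translating by a group element
   preserves cardinality, so |AB| = max(|A|, |B|) = |A| + |B| - 1. *)

lemma (in group) card_set_mult_singleton_left:
  assumes "a \<in> carrier G" and "B \<subseteq> carrier G"
  shows "card (set_mult G {a} B) = card B"
proof -
  have "set_mult G {a} B = (\<lambda>b. a \<otimes> b) ` B"
    unfolding set_mult_def by auto
  moreover have "inj_on (\<lambda>b. a \<otimes> b) B"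
    using assms by (intro inj_onI) (auto simp: subset_iff)
  ultimately show ?thesis
    by (simp add: card_image)
qed

lemma (in group) card_set_mult_singleton_right:
  assumes "A \<subseteq> carrier G" and "b \<in> carrier G"
  shows "card (set_mult G A {b}) = card A"
proof -
  have "set_mult G A {b} = (\<lambda>a. a \<otimes> b) ` A"
    unfolding set_mult_def by auto
  moreover have "inj_on (\<lambda>a. a \<otimes> b) A"
    using assms by (intro inj_onI) (auto simp: subset_iff)
  ultimately show ?thesis
    by (simp add: card_image)
qed

lemma (in comm_group) sidon_product_rectangle_degenerate:
  assumes "sidon G C"
    and carrier: "a \<in> carrier G" "a' \<in> carrier G" "b \<in> carrier G" "b' \<in> carrier G"
    and "a \<otimes> b \<in> C" "a' \<otimes> b' \<in> C" "a \<otimes> b' \<in> C" "a' \<otimes> b \<in> C"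
  shows "a = a' \<or> b = b'"
proof -
  have "(a \<otimes> b) \<otimes> (a' \<otimes> b') = (a \<otimes> b') \<otimes> (a' \<otimes> b)"
    using carrier by (simp add: m_ac)
  then have "{a \<otimes> b, a' \<otimes> b'} = {a \<otimes> b', a' \<otimes> b}"
    using assms unfolding sidon_def by blast
  then have "a \<otimes> b = a \<otimes> b' \<or> a \<otimes> b = a' \<otimes> b"
    by (auto simp: doubleton_eq_iff)
  then show ?thesis
    using carrier by auto
qed

lemma (in comm_group) set_mult_in_sidon_factor_singleton:
  assumes "sidon G C" and "A \<subseteq> carrier G" and "B \<subseteq> carrier G"
    and "A \<noteq> {}" and "B \<noteq> {}" and "set_mult G A B \<subseteq> C"
  shows "(\<exists>a. A = {a}) \<or> (\<exists>b. B = {b})"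
proof (rule ccontr)
  assume "\<not> ?thesis"
  then obtain a a' b b' where "a \<in> A" "a' \<in> A" "a \<noteq> a'" "b \<in> B" "b' \<in> B" "b \<noteq> b'"
    using \<open>A \<noteq> {}\<close> \<open>B \<noteq> {}\<close> by blast
  moreover have "x \<otimes> y \<in> C" if "x \<in> A" "y \<in> B" for x y
    using assms(6) that unfolding set_mult_def by blast
  ultimately show False
    using sidon_product_rectangle_degenerate[OF assms(1)] assms(2,3) by (meson subsetD)
qed

theorem corollary2p8:
  fixes G :: "('a, 'b) monoid_scheme" and A B C :: "'a set"
  assumes "comm_group G"
    and "finite C" and "sidon G C"
    and "A \<subseteq> carrier G" and "B \<subseteq> carrier G"
    and "A \<noteq> {}" and "B \<noteq> {}"
    and "set_mult G A B \<subseteq> C"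
  shows "card (set_mult G A B) + 1 \<ge> card A + card B"
proof -
  interpret comm_group G by (rule assms(1))
  consider a where "A = {a}" | b where "B = {b}"
    using set_mult_in_sidon_factor_singleton assms(3-8) by blast
  then show ?thesis
  proof cases
    case (1 a)
    then show ?thesis
      using card_set_mult_singleton_left assms(4,5) by simp
  next
    case (2 b)
    then show ?thesis
      using card_set_mult_singleton_right assms(4,5) by simp
  qed
qed

end
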